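(* Let $f:\mathbb{R}^n\to\mathbb{R}$ be convex and continuously differentiable, with $|f(x)-f(y)|\le L_0\|x-y\|$ and $\|\nabla f(x)-\nabla f(y)\|\le L_1\|x-y\|$ for all $x,y$. Let $\tilde f(x;\xi)=f(x)[1+\nu(x;\xi)]$, where $\nu$ is i.i.d. with $\mathbb{E}[\nu]=0$, variance $\sigma_r^2>0$, $\mathbb{E}[\frac{1}{1+\nu}]\le b$, and support contained in $[-a,a]$ for some $a<1$. Let $u\in\mathbb{R}^n$ be standard Gaussian and let $u,\xi_1,\xi_2,\xi_3$ be independent. Let $x\in\mathbb{R}^n$ with $f(x)\neq0$ and set $$\tilde\mu=C_4\sqrt{|\tilde f(x;\xi_3)|},\qquad C_4=\left[\frac{16\sigma_r^2 n}{L_1^2(1+3\sigma_r^2)(n+6)^3}\right]^{1/4},$$ and $$\mathcal{E}(\tilde\mu)=\left\|\frac{\tilde f(x+\tilde\mu u;\xi_1)-\tilde f(x;\xi_2)}{\tilde\mu}u-\langle\nabla f(x),u\rangle u\right\|^2 .$$ Then $$\mathbb{E}_{u,\xi_1,\xi_2,\xi_3}[\mathcal{E}(\tilde\mu)]\le(1+b)L_1\sigma_r\sqrt{(1+3\sigma_r^2)n(n+6)^3}\,|f(x)|+3L_0^2\sigma_r^2(n+4)^2.$$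
   Context: $\|\cdot\|$ is the Euclidean norm; "standard Gaussian" means mean $0$ and covariance $I_n$. The noise values in the three evaluations (at $x+\tilde\mu u$ with $\xi_1$, at $x$ with $\xi_2$, at $x$ with $\xi_3$) are independent copies of $\nu$. *)

theory Defs
  imports "HOL-Probability.Probability"
begin

definition std_gaussian :: "'a::euclidean_space measure" where
  "std_gaussian = density lborel (\<lambda>x. ennreal (\<Prod>b\<in>Basis. std_normal_density (x \<bullet> b)))"

end

theory Submission
  imports Defs
begin

text \<open>
  Write \<open>\<mu> = C sqrt \<bar>f x (1 + \<nu>\<^sub>3)\<bar>\<close>. The error equals \<open>\<parallel>u\<parallel>\<^sup>2 (p + q\<^sub>1 \<nu>\<^sub>1 + q\<^sub>2 \<nu>\<^sub>2)\<^sup>2\<close>,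
  where \<open>p\<close> is the noiseless finite-difference error and \<open>q\<^sub>1 = f (x + \<mu> u) / \<mu>\<close>,
  \<open>q\<^sub>2 = - f x / \<mu>\<close>; averaging over the independent centred noises \<open>\<nu>\<^sub>1, \<nu>\<^sub>2\<close> leaves
  \<open>p\<^sup>2 + \<sigma>\<^sup>2 (q\<^sub>1\<^sup>2 + q\<^sub>2\<^sup>2)\<close>. The descent lemma gives \<open>\<bar>p\<bar> \<le> L\<^sub>1 \<mu> \<parallel>u\<parallel>\<^sup>2 / 2\<close> and the
  Lipschitz bound gives \<open>q\<^sub>1\<^sup>2 + q\<^sub>2\<^sup>2 \<le> 3 f(x)\<^sup>2 / \<mu>\<^sup>2 + 2 L\<^sub>0\<^sup>2 \<parallel>u\<parallel>\<^sup>2\<close>. As \<open>\<mu>\<^sup>2\<close> is proportional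
  to \<open>1 + \<nu>\<^sub>3\<close>, the two terms are linear in \<open>1 + \<nu>\<^sub>3\<close> and in \<open>1 / (1 + \<nu>\<^sub>3)\<close>, whose means are
  \<open>1\<close> and at most \<open>b\<close>. Integrating over \<open>u\<close> uses the Gaussian moments
  \<open>E \<parallel>u\<parallel>\<^bsup>2k\<^esup> = 2\<^sup>k (n/2)\<^sub>k = n (n + 2) \<cdots> (n + 2k - 2)\<close>, obtained coordinate by coordinate
  from the one-dimensional moments and Vandermonde's identity for rising factorials. Finally
  \<open>C = C\<^sub>4\<close> balances the Taylor term against the noise term.
\<close>

lemma pochhammer_nonneg_of_nonneg:
  fixes x :: "'a::linordered_semidom"
  shows "0 \<le> x \<Longrightarrow> 0 \<le> pochhammer x n"
  by (induction n) (auto simp: pochhammer_Suc)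

lemma nn_integral_std_normal_even_moment:
  "(\<integral>\<^sup>+y. ennreal (std_normal_density y * y ^ (2 * k)) \<partial>lborel) = ennreal (2 ^ k * pochhammer (1 / 2) k)"
proof -
  have "(\<integral>\<^sup>+y. ennreal (std_normal_density y * y ^ (2 * k)) \<partial>lborel)
      = ennreal (fact (2 * k) / (2 ^ k * fact k))"
    by (subst nn_integral_eq_integral)
       (auto intro: integrable.intros[OF std_normal_moment_even]
             simp: normal_density_nonneg zero_le_even_power integral_std_normal_moment_even)
  also have "fact (2 * k) / (2 ^ k * fact k) = (2 ^ k * pochhammer (1 / 2) k :: real)"
    using fact_double[of k, where 'a=real] by (simp add: mult_2 power_add)
  finally show ?thesis .
qed

lemma nn_integral_std_normal_shifted_square_power:
  assumes "S \<ge> 0"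
  shows "(\<integral>\<^sup>+y. ennreal (std_normal_density y * (S + y\<^sup>2) ^ k) \<partial>lborel)
     = ennreal (\<Sum>j\<le>k. real (k choose j) * (2 ^ j * pochhammer (1 / 2) j) * S ^ (k - j))"
proof -
  have "std_normal_density y * (S + y\<^sup>2) ^ k
      = (\<Sum>j\<le>k. real (k choose j) * S ^ (k - j) * (std_normal_density y * y ^ (2 * j)))" for y
    by (subst add.commute, subst binomial_ring)
       (simp add: sum_distrib_left mult_ac flip: power_mult power_even_eq)
  then have "(\<integral>\<^sup>+y. ennreal (std_normal_density y * (S + y\<^sup>2) ^ k) \<partial>lborel)
      = (\<integral>\<^sup>+y. (\<Sum>j\<le>k. ennreal (real (k choose j) * S ^ (k - j))
                      * ennreal (std_normal_density y * y ^ (2 * j))) \<partial>lborel)"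
    using assms
    by (intro nn_integral_cong)
       (auto simp: sum_ennreal[symmetric] ennreal_mult normal_density_nonneg zero_le_even_power
             intro!: sum.cong)
  also have "\<dots> = (\<Sum>j\<le>k. ennreal (real (k choose j) * S ^ (k - j)) * ennreal (2 ^ j * pochhammer (1 / 2) j))"
    by (subst nn_integral_sum) (auto simp: nn_integral_cmult nn_integral_std_normal_even_moment)
  also have "\<dots> = ennreal (\<Sum>j\<le>k. real (k choose j) * (2 ^ j * pochhammer (1 / 2) j) * S ^ (k - j))"
    using assms
    by (subst sum_ennreal[symmetric])
       (auto simp: pochhammer_nonneg ennreal_mult[symmetric] mult_ac intro!: sum.cong)
  finally show ?thesis .
qed

definition chi_square_moment :: "'a set \<Rightarrow> nat \<Rightarrow> ennreal" where
  "chi_square_moment I k = (\<integral>\<^sup>+x. ennreal ((\<Prod>i\<in>I. std_normal_density (x i)) * (\<Sum>i\<in>I. (x i)\<^sup>2) ^ k)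
     \<partial>(PiM I (\<lambda>_. lborel)))"

lemma chi_square_moment_insert:
  assumes I: "finite I" "i \<notin> I"
  shows "chi_square_moment (insert i I) k
    = (\<Sum>j\<le>k. ennreal (real (k choose j) * 2 ^ j * pochhammer (1 / 2) j) * chi_square_moment I (k - j))"
proof -
  interpret product_sigma_finite "\<lambda>_::'a. lborel::real measure"
    by (simp add: product_sigma_finite_def sigma_finite_lborel)
  define W where "W x = (\<Prod>i\<in>I. std_normal_density (x i))" for x :: "'a \<Rightarrow> real"
  define S where "S x = (\<Sum>i\<in>I. (x i)\<^sup>2)" for x :: "'a \<Rightarrow> real"
  have W0: "W x \<ge> 0" and S0: "S x \<ge> 0" for x
    by (auto simp: W_def S_def normal_density_nonneg intro: prod_nonneg sum_nonneg)
  have upd: "(\<Prod>j\<in>insert i I. std_normal_density (if j = i then y else x j)) = std_normal_density y * W x"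
    "(\<Sum>j\<in>insert i I. (if j = i then y else x j)\<^sup>2) = S x + y\<^sup>2" for x y
    using I unfolding W_def S_def by (auto intro!: prod.cong sum.cong simp: add.commute)
  have "chi_square_moment (insert i I) k
      = (\<integral>\<^sup>+x. (\<integral>\<^sup>+y. ennreal (W x) * ennreal (std_normal_density y * (S x + y\<^sup>2) ^ k) \<partial>lborel)
           \<partial>(PiM I (\<lambda>_. lborel)))"
    unfolding chi_square_moment_def
    by (subst product_nn_integral_insert[OF I])
       (auto simp: upd mult_ac W0 S0 normal_density_nonneg ennreal_mult' intro!: nn_integral_cong)
  also have "\<dots> = (\<integral>\<^sup>+x. (\<Sum>j\<le>k. ennreal (real (k choose j) * 2 ^ j * pochhammer (1 / 2) j)
                    * ennreal (W x * S x ^ (k - j))) \<partial>(PiM I (\<lambda>_. lborel)))"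
  proof (intro nn_integral_cong)
    fix x
    have "(\<integral>\<^sup>+y. ennreal (W x) * ennreal (std_normal_density y * (S x + y\<^sup>2) ^ k) \<partial>lborel)
        = ennreal (W x) * ennreal (\<Sum>j\<le>k. real (k choose j) * (2 ^ j * pochhammer (1 / 2) j) * S x ^ (k - j))"
      by (simp add: nn_integral_cmult nn_integral_std_normal_shifted_square_power S0)
    also have "\<dots> = (\<Sum>j\<le>k. ennreal (real (k choose j) * 2 ^ j * pochhammer (1 / 2) j)
                    * ennreal (W x * S x ^ (k - j)))"
      by (subst ennreal_mult[symmetric])
         (auto simp: W0 S0 sum_nonneg pochhammer_nonneg ennreal_mult[symmetric] sum_distrib_left mult_ac
               intro!: sum_ennreal[symmetric] sum.cong)
    finally show "(\<integral>\<^sup>+y. ennreal (W x) * ennreal (std_normal_density y * (S x + y\<^sup>2) ^ k) \<partial>lborel)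
        = (\<Sum>j\<le>k. ennreal (real (k choose j) * 2 ^ j * pochhammer (1 / 2) j) * ennreal (W x * S x ^ (k - j)))" .
  qed
  also have "\<dots> = (\<Sum>j\<le>k. ennreal (real (k choose j) * 2 ^ j * pochhammer (1 / 2) j) * chi_square_moment I (k - j))"
    unfolding chi_square_moment_def W_def S_def
    by (subst nn_integral_sum) (auto simp: nn_integral_cmult)
  finally show ?thesis .
qed

lemma chi_square_moment_eq:
  assumes "finite I"
  shows "chi_square_moment I k = ennreal (2 ^ k * pochhammer (real (card I) / 2) k)"
  using assms
proof (induction I arbitrary: k rule: finite_induct)
  case empty
  then show ?case
    by (simp add: chi_square_moment_def PiM_empty nn_integral_count_space_finite pochhammer_0_left)
next
  case (insert i I)
  have "chi_square_moment (insert i I) k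
      = (\<Sum>j\<le>k. ennreal (real (k choose j) * 2 ^ j * pochhammer (1 / 2) j)
           * ennreal (2 ^ (k - j) * pochhammer (real (card I) / 2) (k - j)))"
    using insert by (simp add: chi_square_moment_insert)
  also have "\<dots> = ennreal (\<Sum>j\<le>k. of_nat (k choose j) * (2 ^ j * pochhammer (1 / 2) j)
                        * (2 ^ (k - j) * pochhammer (real (card I) / 2) (k - j)))"
    by (subst sum_ennreal[symmetric])
       (auto simp: pochhammer_nonneg_of_nonneg ennreal_mult[symmetric] mult_ac intro!: sum.cong)
  also have "\<dots> = ennreal (2 ^ k * pochhammer (1 / 2 + real (card I) / 2) k)"
    unfolding pochhammer_binomial_sum sum_distrib_left
  proof (intro arg_cong[where f = ennreal] sum.cong refl)
    fix j assume "j \<in> {..k}"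
    then have "(2::real) ^ k = 2 ^ j * 2 ^ (k - j)"
      by (simp flip: power_add)
    then show "of_nat (k choose j) * (2 ^ j * pochhammer (1 / 2) j) * (2 ^ (k - j) * pochhammer (real (card I) / 2) (k - j))
        = 2 ^ k * (of_nat (k choose j) * pochhammer (1 / 2) j * pochhammer (real (card I) / 2) (k - j))"
      by (simp add: mult_ac)
  qed
  also have "1 / 2 + real (card I) / 2 = real (card (insert i I)) / 2"
    using insert by simp
  finally show ?case .
qed

lemma sets_std_gaussian [simp, measurable_cong]: "sets std_gaussian = sets borel"
  by (simp add: std_gaussian_def)

lemma nn_integral_std_gaussian_norm_power:
  "(\<integral>\<^sup>+u. ennreal ((norm u ^ 2) ^ k) \<partial>(std_gaussian :: 'a::euclidean_space measure))
     = ennreal (2 ^ k * pochhammer (real DIM('a) / 2) k)"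
proof -
  have "(\<integral>\<^sup>+u. ennreal ((norm u ^ 2) ^ k) \<partial>(std_gaussian :: 'a measure))
      = (\<integral>\<^sup>+u. ennreal ((\<Prod>b\<in>Basis. std_normal_density (u \<bullet> b)) * (norm u ^ 2) ^ k) \<partial>(lborel :: 'a measure))"
    unfolding std_gaussian_def
    by (subst nn_integral_density)
       (auto intro!: nn_integral_cong simp: ennreal_mult' prod_nonneg normal_density_nonneg)
  also have "\<dots> = chi_square_moment (Basis :: 'a set) k"
  proof -
    have "norm (\<Sum>b\<in>Basis. x b *\<^sub>R b :: 'a) ^ 2 = (\<Sum>b\<in>Basis. (x b)\<^sup>2)" for x
      by (subst power2_norm_eq_inner, subst euclidean_inner) (simp add: power2_eq_square)
    then show ?thesis
      unfolding chi_square_moment_def by (subst lborel_eq) (simp add: nn_integral_distr)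
  qed
  finally show ?thesis
    by (simp add: chi_square_moment_eq)
qed

lemma std_gaussian_norm_moments:
  defines "n \<equiv> real DIM('a)"
  shows "(\<integral>\<^sup>+u. ennreal (norm u ^ 2) \<partial>(std_gaussian :: 'a::euclidean_space measure)) = ennreal n"
    and "(\<integral>\<^sup>+u. ennreal ((norm u ^ 2) ^ 2) \<partial>(std_gaussian :: 'a measure)) = ennreal (n * (n + 2))"
    and "(\<integral>\<^sup>+u. ennreal ((norm u ^ 2) ^ 3) \<partial>(std_gaussian :: 'a measure)) = ennreal (n * (n + 2) * (n + 4))"
proof -
  have p: "2 ^ 1 * pochhammer (n / 2) 1 = n"
    "2 ^ 2 * pochhammer (n / 2) 2 = n * (n + 2)"
    "2 ^ 3 * pochhammer (n / 2) 3 = n * (n + 2) * (n + 4)"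
    by (simp_all add: numeral_eq_Suc pochhammer_Suc algebra_simps)
  show "(\<integral>\<^sup>+u. ennreal (norm u ^ 2) \<partial>(std_gaussian :: 'a measure)) = ennreal n"
    using nn_integral_std_gaussian_norm_power[of 1, where 'a='a]
    unfolding p(1)[unfolded n_def] n_def by (simp only: power_one_right)
  show "(\<integral>\<^sup>+u. ennreal ((norm u ^ 2) ^ 2) \<partial>(std_gaussian :: 'a measure)) = ennreal (n * (n + 2))"
    using nn_integral_std_gaussian_norm_power[of 2, where 'a='a] unfolding p(2)[unfolded n_def] n_def .
  show "(\<integral>\<^sup>+u. ennreal ((norm u ^ 2) ^ 3) \<partial>(std_gaussian :: 'a measure)) = ennreal (n * (n + 2) * (n + 4))"
    using nn_integral_std_gaussian_norm_power[of 3, where 'a='a] unfolding p(3)[unfolded n_def] n_def .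
qed

lemma nn_integral_std_gaussian_norm_cubic:
  fixes c1 c2 c3 :: real
  assumes "c1 \<ge> 0" "c2 \<ge> 0" "c3 \<ge> 0"
  defines "n \<equiv> real DIM('a)"
  shows "(\<integral>\<^sup>+u. ennreal (c3 * (norm u ^ 2) ^ 3 + c1 * norm u ^ 2 + c2 * (norm u ^ 2)\<^sup>2)
           \<partial>(std_gaussian :: 'a::euclidean_space measure))
       = ennreal (c3 * (n * (n + 2) * (n + 4)) + c1 * n + c2 * (n * (n + 2)))"
proof -
  have "(\<integral>\<^sup>+u. ennreal (c3 * (norm u ^ 2) ^ 3 + c1 * norm u ^ 2 + c2 * (norm u ^ 2)\<^sup>2)
           \<partial>(std_gaussian :: 'a measure))
      = (\<integral>\<^sup>+u. ennreal c3 * ennreal ((norm u ^ 2) ^ 3) + ennreal c1 * ennreal (norm u ^ 2)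
           + ennreal c2 * ennreal ((norm u ^ 2)\<^sup>2) \<partial>(std_gaussian :: 'a measure))"
    using assms(1-3)
    by (intro nn_integral_cong) (simp add: ennreal_mult[symmetric] ennreal_plus[symmetric] del: ennreal_plus)
  also have "\<dots> = ennreal c3 * (\<integral>\<^sup>+u. ennreal ((norm u ^ 2) ^ 3) \<partial>(std_gaussian :: 'a measure))
      + ennreal c1 * (\<integral>\<^sup>+u. ennreal (norm u ^ 2) \<partial>(std_gaussian :: 'a measure))
      + ennreal c2 * (\<integral>\<^sup>+u. ennreal ((norm u ^ 2)\<^sup>2) \<partial>(std_gaussian :: 'a measure))"
    by (subst nn_integral_add, measurable, subst nn_integral_add, measurable)
       (simp add: nn_integral_cmult)
  also have "\<dots> = ennreal (c3 * (n * (n + 2) * (n + 4)) + c1 * n + c2 * (n * (n + 2)))"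
    using assms(1-3) unfolding std_gaussian_norm_moments n_def
    by (simp add: ennreal_mult[symmetric] ennreal_plus[symmetric] del: ennreal_plus)
  finally show ?thesis .
qed

lemma lipschitz_gradient_taylor_bound:
  fixes f :: "'a::real_inner \<Rightarrow> real" and grad :: "'a \<Rightarrow> 'a"
  assumes deriv: "\<And>y. (f has_derivative (\<lambda>h. grad y \<bullet> h)) (at y)"
    and lip1: "\<And>y z. norm (grad y - grad z) \<le> L1 * norm (y - z)"
  shows "\<bar>f (x + h) - f x - grad x \<bullet> h\<bar> \<le> L1 / 2 * norm h ^ 2"
proof -
  have deriv_line: "((\<lambda>t. f (x + t *\<^sub>R h)) has_real_derivative (grad (x + t *\<^sub>R h) \<bullet> h)) (at t)" for t
  proof -
    have "((\<lambda>t. x + t *\<^sub>R h) has_derivative (\<lambda>s. s *\<^sub>R h)) (at t)"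
      by (auto intro!: derivative_eq_intros)
    from has_derivative_compose[OF this deriv]
    show ?thesis
      by (simp add: has_field_derivative_def mult_commute_abs)
  qed
  have grad_line: "\<bar>grad (x + t *\<^sub>R h) \<bullet> h - grad x \<bullet> h\<bar> \<le> L1 * t * norm h ^ 2" if "t \<ge> 0" for t
  proof -
    have "\<bar>grad (x + t *\<^sub>R h) \<bullet> h - grad x \<bullet> h\<bar> \<le> norm (grad (x + t *\<^sub>R h) - grad x) * norm h"
      by (metis Cauchy_Schwarz_ineq2 inner_diff_left)
    also have "\<dots> \<le> (L1 * norm (t *\<^sub>R h)) * norm h"
      using lip1[of "x + t *\<^sub>R h" x] by (intro mult_right_mono) auto
    finally show ?thesis
      using that by (simp add: power2_eq_square mult_ac)
  qed
  \<comment> \<open>\<open>\<sigma> = -1\<close> and \<open>\<sigma> = 1\<close> give the upper and the lower bound.\<close>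
  define g where "g \<sigma> t = f (x + t *\<^sub>R h) - f x - t * (grad x \<bullet> h) + \<sigma> * L1 / 2 * t\<^sup>2 * norm h ^ 2"
    for \<sigma> t :: real
  have g_deriv: "(g \<sigma> has_real_derivative
      (grad (x + t *\<^sub>R h) \<bullet> h - grad x \<bullet> h + \<sigma> * L1 * t * norm h ^ 2)) (at t)" for \<sigma> t
    unfolding g_def by (auto intro!: derivative_eq_intros deriv_line)
  have "g (-1) 1 \<le> g (-1) 0"
    by (rule DERIV_nonpos_imp_nonincreasing[of 0 1]) (use g_deriv grad_line in force)+
  moreover have "g 1 0 \<le> g 1 1"
    by (rule DERIV_nonneg_imp_nondecreasing[of 0 1]) (use g_deriv grad_line in force)+
  ultimately show ?thesis
    unfolding g_def abs_le_iff by simp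
qed

locale bounded_relative_noise =
  fixes N :: "real measure" and a b \<sigma>r :: real
  assumes N_prob: "prob_space N"
    and N_sets: "sets N = sets borel"
    and mean0: "integral\<^sup>L N (\<lambda>v. v) = 0"
    and var: "prob_space.variance N (\<lambda>v. v) = \<sigma>r\<^sup>2"
    and inv_bound: "integral\<^sup>L N (\<lambda>v. 1 / (1 + v)) \<le> b"
    and a_lt1: "a < 1"
    and support: "AE v in N. v \<in> {-a..a}"
begin

sublocale prob_space N
  by (rule N_prob)

declare N_sets [measurable_cong]

lemma AE_one_plus_ge: "AE v in N. 1 - a \<le> 1 + v"
  using support by (auto elim!: eventually_mono)

lemma integrable_id: "integrable N (\<lambda>v. v)"
proof (rule integrable_const_bound[where B = "\<bar>a\<bar>"])
  show "AE v in N. norm v \<le> \<bar>a\<bar>"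
    using support by eventually_elim auto
qed simp

lemma integrable_square: "integrable N (\<lambda>v. v\<^sup>2)"
proof (rule integrable_const_bound[where B = "a\<^sup>2"])
  show "AE v in N. norm (v\<^sup>2) \<le> a\<^sup>2"
    using support by eventually_elim (auto intro!: power_mono simp flip: abs_le_square_iff)
qed simp

lemma integrable_inverse_one_plus: "integrable N (\<lambda>v. 1 / (1 + v))"
proof (rule integrable_const_bound[where B = "1 / (1 - a)"])
  show "AE v in N. norm (1 / (1 + v)) \<le> 1 / (1 - a)"
    using AE_one_plus_ge by eventually_elim (use a_lt1 in \<open>auto intro!: frac_le\<close>)
qed simp

lemma integral_square: "integral\<^sup>L N (\<lambda>v. v\<^sup>2) = \<sigma>r\<^sup>2"
  using var mean0 by simp

lemma b_nonneg: "b \<ge> 0"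
proof -
  have "AE v in N. 0 \<le> 1 / (1 + v)"
    using AE_one_plus_ge by eventually_elim (use a_lt1 in simp)
  then have "0 \<le> integral\<^sup>L N (\<lambda>v. 1 / (1 + v))"
    by (rule integral_nonneg_AE)
  then show ?thesis
    using inv_bound by linarith
qed

lemma nn_integral_affine_square:
  assumes "w \<ge> 0" "r \<ge> 0"
  shows "(\<integral>\<^sup>+v. ennreal (w * ((p + q * v)\<^sup>2 + r)) \<partial>N) = ennreal (w * (p\<^sup>2 + q\<^sup>2 * \<sigma>r\<^sup>2 + r))"
proof -
  have expand: "(\<lambda>v. w * ((p + q * v)\<^sup>2 + r)) = (\<lambda>v. w * (p\<^sup>2 + r) + (2 * w * p * q) * v + (w * q\<^sup>2) * v\<^sup>2)"
    by (simp add: power2_eq_square algebra_simps)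
  have "(\<integral>\<^sup>+v. ennreal (w * ((p + q * v)\<^sup>2 + r)) \<partial>N) = ennreal (integral\<^sup>L N (\<lambda>v. w * ((p + q * v)\<^sup>2 + r)))"
    using assms integrable_id integrable_square by (intro nn_integral_eq_integral) (auto simp: expand)
  also have "integral\<^sup>L N (\<lambda>v. w * ((p + q * v)\<^sup>2 + r)) = w * (p\<^sup>2 + r) + (w * q\<^sup>2) * \<sigma>r\<^sup>2"
    unfolding expand using integrable_id integrable_square by (simp add: mean0 integral_square prob_space)
  finally show ?thesis
    by (simp add: algebra_simps)
qed

lemma nn_integral_le_affine_reciprocal:
  assumes "A \<ge> 0" "B \<ge> 0" "D \<ge> 0"
    and h: "AE v in N. h v \<le> A * (1 + v) + B / (1 + v) + D"
  shows "(\<integral>\<^sup>+v. ennreal (h v) \<partial>N) \<le> ennreal (A + B * b + D)"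
proof -
  have int_reciprocal: "integrable N (\<lambda>v. B / (1 + v))"
    using integrable_mult_right[OF integrable_inverse_one_plus, of B] by simp
  have "(\<integral>\<^sup>+v. ennreal (h v) \<partial>N) \<le> (\<integral>\<^sup>+v. ennreal (A * (1 + v) + B / (1 + v) + D) \<partial>N)"
    using h by (intro nn_integral_mono_AE) (auto elim!: eventually_mono intro: ennreal_leI)
  also have "\<dots> = ennreal (integral\<^sup>L N (\<lambda>v. A * (1 + v) + B / (1 + v) + D))"
  proof (rule nn_integral_eq_integral)
    show "integrable N (\<lambda>v. A * (1 + v) + B / (1 + v) + D)"
      using integrable_id int_reciprocal by simp
    show "AE v in N. 0 \<le> A * (1 + v) + B / (1 + v) + D"
      using AE_one_plus_ge by eventually_elim (use assms a_lt1 in simp)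
  qed
  also have "integral\<^sup>L N (\<lambda>v. A * (1 + v) + B / (1 + v) + D) = A + B * integral\<^sup>L N (\<lambda>v. 1 / (1 + v)) + D"
    using integrable_id int_reciprocal integral_mult_right_zero[of N B "\<lambda>v. 1 / (1 + v)"]
    by (simp add: mean0 prob_space)
  also have "\<dots> \<le> A + B * b + D"
    using inv_bound assms by (simp add: mult_left_mono)
  finally show ?thesis
    by (simp add: ennreal_leI)
qed

end

lemma difference_quotient_error_sq_le:
  fixes f :: "'a::real_inner \<Rightarrow> real"
  assumes taylor: "\<And>h. \<bar>f (x + h) - f x - g \<bullet> h\<bar> \<le> L1 / 2 * norm h ^ 2"
    and \<mu>: "\<mu> > 0"
  shows "((f (x + \<mu> *\<^sub>R u) - f x) / \<mu> - g \<bullet> u)\<^sup>2 \<le> L1\<^sup>2 * \<mu>\<^sup>2 / 4 * (norm u ^ 2)\<^sup>2"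
proof -
  have "\<bar>(f (x + \<mu> *\<^sub>R u) - f x) / \<mu> - g \<bullet> u\<bar> = \<bar>f (x + \<mu> *\<^sub>R u) - f x - g \<bullet> (\<mu> *\<^sub>R u)\<bar> / \<mu>"
    using \<mu> by (simp add: field_simps abs_div)
  also have "\<dots> \<le> L1 / 2 * norm (\<mu> *\<^sub>R u) ^ 2 / \<mu>"
    using taylor[of "\<mu> *\<^sub>R u"] \<mu> by (intro divide_right_mono) auto
  also have "\<dots> = L1 / 2 * \<mu> * norm u ^ 2"
    using \<mu> by (simp add: power2_eq_square)
  finally have "((f (x + \<mu> *\<^sub>R u) - f x) / \<mu> - g \<bullet> u)\<^sup>2 \<le> (L1 / 2 * \<mu> * norm u ^ 2)\<^sup>2"
    by (metis abs_ge_zero power2_abs power_mono)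
  then show ?thesis
    by (simp add: power_mult_distrib power_divide)
qed

lemma square_le_of_abs_diff_le:
  fixes y z d :: real
  assumes "\<bar>y - z\<bar> \<le> d"
  shows "y\<^sup>2 \<le> 2 * z\<^sup>2 + 2 * d\<^sup>2"
proof -
  have "(y - z)\<^sup>2 \<le> d\<^sup>2"
    by (metis abs_ge_zero assms power2_abs power_mono)
  moreover have "y\<^sup>2 \<le> 2 * z\<^sup>2 + 2 * (y - z)\<^sup>2"
    using sum_squares_ge_zero[of "y - 2 * z" 0] by (simp add: power2_eq_square algebra_simps)
  ultimately show ?thesis
    by simp
qed

lemma noisy_difference_quotient_error_le:
  fixes f :: "'a::real_inner \<Rightarrow> real"
  assumes taylor: "\<And>h. \<bar>f (x + h) - f x - g \<bullet> h\<bar> \<le> L1 / 2 * norm h ^ 2"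
    and lip0: "\<And>h. \<bar>f (x + h) - f x\<bar> \<le> L0 * norm h"
    and C: "C > 0" and fx: "f x \<noteq> 0" and t: "t > 0" and s: "s \<ge> 0"
    and \<mu>: "\<mu> = C * sqrt \<bar>f x * t\<bar>"
  shows "norm u ^ 2 * (((f (x + \<mu> *\<^sub>R u) - f x) / \<mu> - g \<bullet> u)\<^sup>2 + ((f (x + \<mu> *\<^sub>R u) / \<mu>)\<^sup>2 + (f x / \<mu>)\<^sup>2) * s)
     \<le> L1\<^sup>2 * C\<^sup>2 * \<bar>f x\<bar> / 4 * (norm u ^ 2) ^ 3 * t + 3 * s * \<bar>f x\<bar> / C\<^sup>2 * norm u ^ 2 / t
        + 2 * s * L0\<^sup>2 * (norm u ^ 2)\<^sup>2"
proof -
  define U where "U = norm u ^ 2"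
  have \<mu>_pos: "\<mu> > 0"
    unfolding \<mu> using C fx t by simp
  have \<mu>_sq: "\<mu>\<^sup>2 = C\<^sup>2 * \<bar>f x\<bar> * t"
    unfolding \<mu> using t by (simp add: power_mult_distrib abs_mult)
  have "U * ((f (x + \<mu> *\<^sub>R u) - f x) / \<mu> - g \<bullet> u)\<^sup>2 \<le> U * (L1\<^sup>2 * \<mu>\<^sup>2 / 4 * U\<^sup>2)"
    unfolding U_def by (intro mult_left_mono difference_quotient_error_sq_le taylor \<mu>_pos) auto
  also have "\<dots> = L1\<^sup>2 * C\<^sup>2 * \<bar>f x\<bar> / 4 * U ^ 3 * t"
    unfolding \<mu>_sq by (simp add: power2_eq_square power3_eq_cube)
  finally have taylor_part: "U * ((f (x + \<mu> *\<^sub>R u) - f x) / \<mu> - g \<bullet> u)\<^sup>2 \<le> L1\<^sup>2 * C\<^sup>2 * \<bar>f x\<bar> / 4 * U ^ 3 * t" .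
  have "(f (x + \<mu> *\<^sub>R u) / \<mu>)\<^sup>2 + (f x / \<mu>)\<^sup>2 = ((f (x + \<mu> *\<^sub>R u))\<^sup>2 + (f x)\<^sup>2) / \<mu>\<^sup>2"
    by (simp add: power_divide add_divide_distrib)
  also have "\<dots> \<le> (2 * L0\<^sup>2 * \<mu>\<^sup>2 * U + 3 * (f x)\<^sup>2) / \<mu>\<^sup>2"
    using square_le_of_abs_diff_le[OF lip0[of "\<mu> *\<^sub>R u"]] \<mu>_pos
    by (intro divide_right_mono) (simp_all add: U_def power_mult_distrib)
  also have "\<dots> = 2 * L0\<^sup>2 * U + 3 * \<bar>f x\<bar> / C\<^sup>2 / t"
    unfolding \<mu>_sq using C fx t by (simp add: field_simps power2_eq_square)
  finally have lipschitz_part: "U * (((f (x + \<mu> *\<^sub>R u) / \<mu>)\<^sup>2 + (f x / \<mu>)\<^sup>2) * s)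
      \<le> U * ((2 * L0\<^sup>2 * U + 3 * \<bar>f x\<bar> / C\<^sup>2 / t) * s)"
    using s by (intro mult_left_mono mult_right_mono) (auto simp: U_def)
  have "U * (((f (x + \<mu> *\<^sub>R u) - f x) / \<mu> - g \<bullet> u)\<^sup>2 + ((f (x + \<mu> *\<^sub>R u) / \<mu>)\<^sup>2 + (f x / \<mu>)\<^sup>2) * s)
      \<le> L1\<^sup>2 * C\<^sup>2 * \<bar>f x\<bar> / 4 * U ^ 3 * t + U * ((2 * L0\<^sup>2 * U + 3 * \<bar>f x\<bar> / C\<^sup>2 / t) * s)"
    unfolding distrib_left by (rule add_mono[OF taylor_part lipschitz_part])
  also have "\<dots> = L1\<^sup>2 * C\<^sup>2 * \<bar>f x\<bar> / 4 * U ^ 3 * t + 3 * s * \<bar>f x\<bar> / C\<^sup>2 * U / t + 2 * s * L0\<^sup>2 * U\<^sup>2"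
    by (simp add: algebra_simps power2_eq_square)
  finally show ?thesis
    unfolding U_def .
qed

context bounded_relative_noise
begin

lemma nn_integral_two_noise_square:
  fixes p q1 q2 :: "real \<Rightarrow> real"
  assumes [measurable]: "p \<in> borel_measurable borel" "q1 \<in> borel_measurable borel" "q2 \<in> borel_measurable borel"
    and w: "w \<ge> 0"
  shows "(\<integral>\<^sup>+(v1, v2, v3). ennreal (w * (p v3 + q1 v3 * v1 + q2 v3 * v2)\<^sup>2) \<partial>(N \<Otimes>\<^sub>M (N \<Otimes>\<^sub>M N)))
    = (\<integral>\<^sup>+v. ennreal (w * ((p v)\<^sup>2 + ((q1 v)\<^sup>2 + (q2 v)\<^sup>2) * \<sigma>r\<^sup>2)) \<partial>N)"
proof -
  interpret NN: pair_prob_space N N ..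
  interpret N3: pair_prob_space N "N \<Otimes>\<^sub>M N"
    by (intro pair_prob_space.intro pair_sigma_finite.intro prob_space_imp_sigma_finite
        prob_space_axioms NN.prob_space_axioms)
  have "(\<integral>\<^sup>+(v1, v2, v3). ennreal (w * (p v3 + q1 v3 * v1 + q2 v3 * v2)\<^sup>2) \<partial>(N \<Otimes>\<^sub>M (N \<Otimes>\<^sub>M N)))
      = (\<integral>\<^sup>+(v2, v3). (\<integral>\<^sup>+v1. ennreal (w * (((p v3 + q2 v3 * v2) + q1 v3 * v1)\<^sup>2 + 0)) \<partial>N) \<partial>(N \<Otimes>\<^sub>M N))"
    by (subst N3.nn_integral_snd[symmetric]) (auto simp: split_beta' algebra_simps)
  also have "\<dots> = (\<integral>\<^sup>+(v2, v3). ennreal (w * ((p v3 + q2 v3 * v2)\<^sup>2 + (q1 v3)\<^sup>2 * \<sigma>r\<^sup>2)) \<partial>(N \<Otimes>\<^sub>M N))"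
    using nn_integral_affine_square[OF w order_refl] by (simp add: split_beta')
  also have "\<dots> = (\<integral>\<^sup>+v3. (\<integral>\<^sup>+v2. ennreal (w * ((p v3 + q2 v3 * v2)\<^sup>2 + (q1 v3)\<^sup>2 * \<sigma>r\<^sup>2)) \<partial>N) \<partial>N)"
    by (subst NN.nn_integral_snd[symmetric]) (auto simp: case_prod_beta)
  also have "\<dots> = (\<integral>\<^sup>+v. ennreal (w * ((p v)\<^sup>2 + ((q1 v)\<^sup>2 + (q2 v)\<^sup>2) * \<sigma>r\<^sup>2)) \<partial>N)"
    by (intro nn_integral_cong, subst nn_integral_affine_square[OF w]) (auto simp: algebra_simps)
  finally show ?thesis .
qed

lemma nn_integral_noisy_error_le:
  fixes f :: "'a::euclidean_space \<Rightarrow> real"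
  assumes [measurable]: "f \<in> borel_measurable borel"
    and taylor: "\<And>h. \<bar>f (x + h) - f x - g \<bullet> h\<bar> \<le> L1 / 2 * norm h ^ 2"
    and lip0: "\<And>h. \<bar>f (x + h) - f x\<bar> \<le> L0 * norm h"
    and C: "C > 0" and fx: "f x \<noteq> 0"
  defines "\<mu> v \<equiv> C * sqrt \<bar>f x * (1 + v)\<bar>"
  shows "(\<integral>\<^sup>+(v1, v2, v3). ennreal ((norm (((f (x + \<mu> v3 *\<^sub>R u) * (1 + v1) - f x * (1 + v2)) / \<mu> v3) *\<^sub>R u
              - (g \<bullet> u) *\<^sub>R u))\<^sup>2) \<partial>(N \<Otimes>\<^sub>M (N \<Otimes>\<^sub>M N)))
    \<le> ennreal (L1\<^sup>2 * C\<^sup>2 * \<bar>f x\<bar> / 4 * (norm u ^ 2) ^ 3 + 3 * \<sigma>r\<^sup>2 * \<bar>f x\<bar> / C\<^sup>2 * b * norm u ^ 2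
        + 2 * \<sigma>r\<^sup>2 * L0\<^sup>2 * (norm u ^ 2)\<^sup>2)"
proof -
  define U where "U = norm u ^ 2"
  define p where "p v = (f (x + \<mu> v *\<^sub>R u) - f x) / \<mu> v - g \<bullet> u" for v
  define q1 where "q1 v = f (x + \<mu> v *\<^sub>R u) / \<mu> v" for v
  define q2 where "q2 v = - (f x / \<mu> v)" for v
  have "(norm (((f (x + \<mu> v3 *\<^sub>R u) * (1 + v1) - f x * (1 + v2)) / \<mu> v3) *\<^sub>R u - (g \<bullet> u) *\<^sub>R u))\<^sup>2
      = U * (p v3 + q1 v3 * v1 + q2 v3 * v2)\<^sup>2" for v1 v2 v3
    unfolding U_def p_def q1_def q2_def
    by (simp add: power_mult_distrib diff_divide_distrib add_divide_distrib algebra_simps flip: scaleR_diff_left)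
  then have "(\<integral>\<^sup>+(v1, v2, v3). ennreal ((norm (((f (x + \<mu> v3 *\<^sub>R u) * (1 + v1) - f x * (1 + v2)) / \<mu> v3) *\<^sub>R u
              - (g \<bullet> u) *\<^sub>R u))\<^sup>2) \<partial>(N \<Otimes>\<^sub>M (N \<Otimes>\<^sub>M N)))
      = (\<integral>\<^sup>+(v1, v2, v3). ennreal (U * (p v3 + q1 v3 * v1 + q2 v3 * v2)\<^sup>2) \<partial>(N \<Otimes>\<^sub>M (N \<Otimes>\<^sub>M N)))"
    by simp
  also have "\<dots> = (\<integral>\<^sup>+v. ennreal (U * ((p v)\<^sup>2 + ((q1 v)\<^sup>2 + (q2 v)\<^sup>2) * \<sigma>r\<^sup>2)) \<partial>N)"
  proof (rule nn_integral_two_noise_square)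
    show "p \<in> borel_measurable borel"
      unfolding p_def \<mu>_def by measurable
    show "q1 \<in> borel_measurable borel"
      unfolding q1_def \<mu>_def by measurable
    show "q2 \<in> borel_measurable borel"
      unfolding q2_def \<mu>_def by measurable
  qed (simp add: U_def)
  also have "\<dots> \<le> ennreal (L1\<^sup>2 * C\<^sup>2 * \<bar>f x\<bar> / 4 * U ^ 3 + 3 * \<sigma>r\<^sup>2 * \<bar>f x\<bar> / C\<^sup>2 * U * b + 2 * \<sigma>r\<^sup>2 * L0\<^sup>2 * U\<^sup>2)"
  proof (rule nn_integral_le_affine_reciprocal)
    show "AE v in N. U * ((p v)\<^sup>2 + ((q1 v)\<^sup>2 + (q2 v)\<^sup>2) * \<sigma>r\<^sup>2)
        \<le> L1\<^sup>2 * C\<^sup>2 * \<bar>f x\<bar> / 4 * U ^ 3 * (1 + v) + 3 * \<sigma>r\<^sup>2 * \<bar>f x\<bar> / C\<^sup>2 * U / (1 + v)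
          + 2 * \<sigma>r\<^sup>2 * L0\<^sup>2 * U\<^sup>2"
      using AE_one_plus_ge
    proof eventually_elim
      case (elim v)
      then have "1 + v > 0"
        using a_lt1 by simp
      then show ?case
        unfolding U_def p_def q1_def q2_def power2_minus
        by (intro noisy_difference_quotient_error_le[OF taylor lip0 C fx]) (auto simp: \<mu>_def)
    qed
  qed (auto simp: U_def)
  finally show ?thesis
    unfolding U_def by (simp add: mult_ac)
qed

end

lemma (in bounded_relative_noise) nn_integral_zo_error_le:
  fixes f :: "'a::euclidean_space \<Rightarrow> real"
  assumes [measurable]: "f \<in> borel_measurable borel"
    and taylor: "\<And>h. \<bar>f (x + h) - f x - g \<bullet> h\<bar> \<le> L1 / 2 * norm h ^ 2"
    and lip0: "\<And>h. \<bar>f (x + h) - f x\<bar> \<le> L0 * norm h"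
    and C: "C > 0" and fx: "f x \<noteq> 0"
  defines "n \<equiv> real DIM('a)"
  shows "(\<integral>\<^sup>+(u, v1, v2, v3). ennreal ((norm (((f (x + (C * sqrt \<bar>f x * (1 + v3)\<bar>) *\<^sub>R u) * (1 + v1)
              - f x * (1 + v2)) / (C * sqrt \<bar>f x * (1 + v3)\<bar>)) *\<^sub>R u - (g \<bullet> u) *\<^sub>R u))\<^sup>2)
          \<partial>(std_gaussian \<Otimes>\<^sub>M (N \<Otimes>\<^sub>M (N \<Otimes>\<^sub>M N))))
    \<le> ennreal (L1\<^sup>2 * C\<^sup>2 * \<bar>f x\<bar> / 4 * (n * (n + 2) * (n + 4)) + 3 * \<sigma>r\<^sup>2 * \<bar>f x\<bar> / C\<^sup>2 * b * n
        + 2 * \<sigma>r\<^sup>2 * L0\<^sup>2 * (n * (n + 2)))"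
  (is "(\<integral>\<^sup>+(u, v). ?E u v \<partial>_) \<le> _")
proof -
  interpret N3: prob_space "N \<Otimes>\<^sub>M (N \<Otimes>\<^sub>M N)"
    by (intro prob_space_pair prob_space_axioms)
  have "(\<integral>\<^sup>+(u, v). ?E u v \<partial>(std_gaussian \<Otimes>\<^sub>M (N \<Otimes>\<^sub>M (N \<Otimes>\<^sub>M N))))
      = (\<integral>\<^sup>+u. (\<integral>\<^sup>+v. ?E u v \<partial>(N \<Otimes>\<^sub>M (N \<Otimes>\<^sub>M N))) \<partial>(std_gaussian :: 'a measure))"
    by (subst N3.nn_integral_fst[symmetric]) (auto simp: split_beta')
  also have "\<dots> \<le> (\<integral>\<^sup>+u. ennreal (L1\<^sup>2 * C\<^sup>2 * \<bar>f x\<bar> / 4 * (norm u ^ 2) ^ 3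
         + 3 * \<sigma>r\<^sup>2 * \<bar>f x\<bar> / C\<^sup>2 * b * norm u ^ 2 + 2 * \<sigma>r\<^sup>2 * L0\<^sup>2 * (norm u ^ 2)\<^sup>2)
      \<partial>(std_gaussian :: 'a measure))"
    using nn_integral_noisy_error_le[OF _ taylor lip0 C fx] by (intro nn_integral_mono) (simp add: split_beta')
  also have "\<dots> = ennreal (L1\<^sup>2 * C\<^sup>2 * \<bar>f x\<bar> / 4 * (n * (n + 2) * (n + 4)) + 3 * \<sigma>r\<^sup>2 * \<bar>f x\<bar> / C\<^sup>2 * b * n
        + 2 * \<sigma>r\<^sup>2 * L0\<^sup>2 * (n * (n + 2)))"
    unfolding n_def using b_nonneg by (intro nn_integral_std_gaussian_norm_cubic) auto
  finally show ?thesis .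
qed

definition zo_smoothing_constant :: "real \<Rightarrow> real \<Rightarrow> real \<Rightarrow> real" where
  "zo_smoothing_constant n \<sigma> L1 = (16 * \<sigma>\<^sup>2 * n / (L1\<^sup>2 * (1 + 3 * \<sigma>\<^sup>2) * (n + 6) ^ 3)) powr (1/4)"

lemma zo_smoothing_constant_pos:
  assumes "n > 0" "\<sigma> > 0" "L1 > 0"
  shows "zo_smoothing_constant n \<sigma> L1 > 0"
proof -
  have "1 + 3 * \<sigma>\<^sup>2 > 0"
    by (simp add: add_pos_nonneg)
  then show ?thesis
    unfolding zo_smoothing_constant_def using assms by simp
qed

lemma zo_smoothing_constant_sq:
  assumes "n > 0" "\<sigma> > 0" "L1 > 0"
  shows "(zo_smoothing_constant n \<sigma> L1)\<^sup>2 = 4 * \<sigma> * sqrt n / (L1 * sqrt ((1 + 3 * \<sigma>\<^sup>2) * (n + 6) ^ 3))"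
proof -
  have "(zo_smoothing_constant n \<sigma> L1)\<^sup>2 = (16 * \<sigma>\<^sup>2 * n / (L1\<^sup>2 * ((1 + 3 * \<sigma>\<^sup>2) * (n + 6) ^ 3))) powr (1/2)"
    unfolding zo_smoothing_constant_def power2_eq_square by (simp add: powr_add[symmetric] mult.assoc)
  also have "\<dots> = 4 * \<sigma> * sqrt n / (L1 * sqrt ((1 + 3 * \<sigma>\<^sup>2) * (n + 6) ^ 3))"
    using assms by (simp add: powr_half_sqrt add_pos_nonneg real_sqrt_divide real_sqrt_mult)
  finally show ?thesis .
qed

lemma zo_error_constant_le:
  fixes n \<sigma> L0 L1 F b :: real
  assumes n: "n > 0" and \<sigma>: "\<sigma> > 0" and L1: "L1 > 0" and b: "b \<ge> 0" and F: "F \<ge> 0"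
  defines "C \<equiv> zo_smoothing_constant n \<sigma> L1"
  shows "L1\<^sup>2 * C\<^sup>2 * F / 4 * (n * (n + 2) * (n + 4)) + 3 * \<sigma>\<^sup>2 * F / C\<^sup>2 * b * n + 2 * \<sigma>\<^sup>2 * L0\<^sup>2 * (n * (n + 2))
     \<le> (1 + b) * L1 * \<sigma> * sqrt ((1 + 3 * \<sigma>\<^sup>2) * n * (n + 6) ^ 3) * F + 3 * L0\<^sup>2 * \<sigma>\<^sup>2 * (n + 4)\<^sup>2"
proof -
  define Z where "Z = (1 + 3 * \<sigma>\<^sup>2) * (n + 6) ^ 3"
  have Z: "Z > 0"
    unfolding Z_def using n by (simp add: add_pos_nonneg)
  have C_sq: "C\<^sup>2 = 4 * \<sigma> * sqrt n / (L1 * sqrt Z)"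
    unfolding C_def Z_def using n \<sigma> L1 by (rule zo_smoothing_constant_sq)
  have sqrt_split: "sqrt ((1 + 3 * \<sigma>\<^sup>2) * n * (n + 6) ^ 3) = sqrt n * sqrt Z"
    unfolding Z_def by (simp add: real_sqrt_mult[symmetric] mult_ac)
  have "n * (n + 2) * (n + 4) \<le> (n + 6) ^ 3"
    using n by (simp add: power3_eq_cube mult_mono)
  also have "\<dots> \<le> Z"
    unfolding Z_def using n by simp
  finally have cubic_le: "n * (n + 2) * (n + 4) \<le> Z" .
  have "L1\<^sup>2 * C\<^sup>2 * F / 4 * (n * (n + 2) * (n + 4)) = L1 * \<sigma> * sqrt n * F * (n * (n + 2) * (n + 4)) / sqrt Z"
    unfolding C_sq using L1 Z by (simp add: field_simps power2_eq_square)
  also have "\<dots> \<le> L1 * \<sigma> * sqrt n * F * Z / sqrt Z"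
    using cubic_le L1 \<sigma> n F Z by (intro divide_right_mono mult_left_mono) auto
  also have "\<dots> = L1 * \<sigma> * (sqrt n * sqrt Z) * F"
    using Z real_div_sqrt[of Z] by (simp add: times_divide_eq_right[symmetric] del: times_divide_eq_right)
  finally have taylor_term: "L1\<^sup>2 * C\<^sup>2 * F / 4 * (n * (n + 2) * (n + 4)) \<le> L1 * \<sigma> * (sqrt n * sqrt Z) * F" .
  have "3 * \<sigma>\<^sup>2 * F / C\<^sup>2 * b * n = 3 / 4 * (b * L1 * \<sigma> * sqrt Z * F) * (n / sqrt n)"
    unfolding C_sq using L1 Z n \<sigma> by (simp add: field_simps power2_eq_square)
  also have "\<dots> = 3 / 4 * (b * L1 * \<sigma> * (sqrt n * sqrt Z) * F)"
    using n by (simp add: real_div_sqrt)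
  also have "\<dots> \<le> b * L1 * \<sigma> * (sqrt n * sqrt Z) * F"
    using b L1 \<sigma> n Z F by simp
  finally have noise_term: "3 * \<sigma>\<^sup>2 * F / C\<^sup>2 * b * n \<le> b * L1 * \<sigma> * (sqrt n * sqrt Z) * F" .
  have "2 * (n * (n + 2)) \<le> 3 * (n + 4)\<^sup>2"
    using n by (simp add: power2_eq_square algebra_simps)
  then have "\<sigma>\<^sup>2 * L0\<^sup>2 * (2 * (n * (n + 2))) \<le> \<sigma>\<^sup>2 * L0\<^sup>2 * (3 * (n + 4)\<^sup>2)"
    by (rule mult_left_mono) simp
  then have lipschitz_term: "2 * \<sigma>\<^sup>2 * L0\<^sup>2 * (n * (n + 2)) \<le> 3 * L0\<^sup>2 * \<sigma>\<^sup>2 * (n + 4)\<^sup>2"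
    by (simp only: mult_ac)
  show ?thesis
    using add_mono[OF add_mono[OF taylor_term noise_term] lipschitz_term]
    unfolding sqrt_split by (simp add: algebra_simps)
qed

theorem lemma3:
  fixes f :: "'a::euclidean_space \<Rightarrow> real"
    and grad :: "'a \<Rightarrow> 'a"
    and N :: "real measure"
    and L0 L1 a b \<sigma>r :: real
    and x :: 'a
  assumes conv: "convex_on UNIV f"
    and deriv: "\<And>y. (f has_derivative (\<lambda>h. grad y \<bullet> h)) (at y)"
    and grad_cont: "continuous_on UNIV grad"
    and lip0: "\<And>y z. \<bar>f y - f z\<bar> \<le> L0 * norm (y - z)"
    and lip1: "\<And>y z. norm (grad y - grad z) \<le> L1 * norm (y - z)"
    and L1_pos: "L1 > 0"
    and N_prob: "prob_space N"
    and N_sets: "sets N = sets borel"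
    and mean0: "integral\<^sup>L N (\<lambda>v. v) = 0"
    and var: "prob_space.variance N (\<lambda>v. v) = \<sigma>r\<^sup>2"
    and \<sigma>r_pos: "\<sigma>r > 0"
    and inv_bound: "integral\<^sup>L N (\<lambda>v. 1 / (1 + v)) \<le> b"
    and a_lt1: "a < 1"
    and support: "AE v in N. v \<in> {-a..a}"
    and fx: "f x \<noteq> 0"
  shows "(\<integral>\<^sup>+ (u, \<nu>1, \<nu>2, \<nu>3). ennreal
            (let n = real DIM('a);
                 C4 = (16 * \<sigma>r\<^sup>2 * n / (L1\<^sup>2 * (1 + 3 * \<sigma>r\<^sup>2) * (n + 6) ^ 3)) powr (1/4);
                 \<mu> = C4 * sqrt \<bar>f x * (1 + \<nu>3)\<bar>
             in (norm (((f (x + \<mu> *\<^sub>R u) * (1 + \<nu>1) - f x * (1 + \<nu>2)) / \<mu>) *\<^sub>R u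
                        - (grad x \<bullet> u) *\<^sub>R u))\<^sup>2)
          \<partial>(std_gaussian \<Otimes>\<^sub>M (N \<Otimes>\<^sub>M (N \<Otimes>\<^sub>M N))))
       \<le> ennreal ((1 + b) * L1 * \<sigma>r * sqrt ((1 + 3 * \<sigma>r\<^sup>2) * real DIM('a) * (real DIM('a) + 6) ^ 3) * \<bar>f x\<bar>
                  + 3 * L0\<^sup>2 * \<sigma>r\<^sup>2 * (real DIM('a) + 4)\<^sup>2)"
proof -
  interpret bounded_relative_noise N a b \<sigma>r
    unfolding bounded_relative_noise_def using N_prob N_sets mean0 var inv_bound a_lt1 support by blast
  have n: "real DIM('a) > 0"
    by simp
  have f_borel: "f \<in> borel_measurable borel"
    using deriv by (metis borel_measurable_continuous_onI continuous_at_imp_continuous_on has_derivative_continuous)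
  have taylor: "\<bar>f (x + h) - f x - grad x \<bullet> h\<bar> \<le> L1 / 2 * norm h ^ 2" for h
    by (rule lipschitz_gradient_taylor_bound[OF deriv lip1])
  have lip0_at_x: "\<bar>f (x + h) - f x\<bar> \<le> L0 * norm h" for h
    using lip0[of "x + h" x] by simp
  note error_le = nn_integral_zo_error_le[OF f_borel taylor lip0_at_x
      zo_smoothing_constant_pos[OF n \<sigma>r_pos L1_pos] fx]
  note constant_le = zo_error_constant_le[OF n \<sigma>r_pos L1_pos b_nonneg abs_ge_zero[of "f x"], of L0]
  show ?thesis
    unfolding Let_def zo_smoothing_constant_def[symmetric]
    using order_trans[OF error_le ennreal_leI[OF constant_le]] .
qed

end
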